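(* Let $A,B$ be finite nonempty subsets of an abelian group $\mathbf G$ and $k\ge1$ an integer. Then $$R^{(k)}_B[A]\ge\frac{|B|^{2k}}{\lambda_1^2(A,B,k)}\quad\text{and}\quad R^{(k)}_B[A]\ge\frac{|B|^{2k}}{\mathsf E_{2k+1}(A,B)^{1/2}}.$$ Moreover, if $A_1\subseteq A$ and $B^{(y)}\subseteq B^k$ ($y\in A_1$) is an arbitrary family of sets, then for each choice of sign $$\Big|\bigcup_{y\in A_1}\big(B^{(y)}\pm\Delta(y)\big)\Big|\ge\frac{\big(\sum_{y\in A_1}|B^{(y)}|\big)^2}{\mathsf E_{k+1}(A,B)}.$$
   Context: $R^{(k)}_B[A]=\min_{\emptyset\ne Z\subseteq A}|B^k+\Delta(Z)|/|Z|$, where $\Delta(Z)=\{(z,\dots,z)\in\mathbf G^k:z\in Z\}$ and $\Delta(y)=\Delta(\{y\})$; sums in $\mathbf G^k$ are coordinatewise. $(X\circ X)(x)=|\{(a,b)\in X^2:b-a=x\}|$ and $\mathsf E_j(A,B)=\sum_x(A\circ A)(x)(B\circ B)(x)^{j-1}$. $\lambda_1(A,B,k)$ is the largest singular value of the real matrix $\mathbf M$ with rows indexed by $x=(x_1,\dots,x_k)\in B^k-\Delta(A)$ and columns by $y\in A$, with entries $\mathbf M(x,y)=A(y)B(y+x_1)\cdots B(y+x_k)$ (indicator functions), i.e. $\lambda_1=\max_{w\ne0}\|\mathbf Mw\|_2/\|w\|_2$; equivalently $\lambda_1^2=\max\{\sum_s(w\circ w)(s)(B\circ B)(s)^k:\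 \|w\|_2=1,\ \mathrm{supp}\,w\subseteq A\}$ with $(w\circ w)(s)=\sum_y w(y)w(y+s)$. *)

theory Defs
  imports Main "HOL-Library.FuncSet" Complex_Main
begin

text \<open>k-tuples over G are modelled as extensional functions on {..<k}.\<close>

definition tpow :: "nat \<Rightarrow> 'a set \<Rightarrow> (nat \<Rightarrow> 'a) set" where
  "tpow k S = PiE {..<k} (\<lambda>_. S)"

definition diag :: "nat \<Rightarrow> 'a \<Rightarrow> (nat \<Rightarrow> 'a)" where
  "diag k z = restrict (\<lambda>_. z) {..<k}"

definition tadd :: "nat \<Rightarrow> (nat \<Rightarrow> 'a::ab_group_add) \<Rightarrow> (nat \<Rightarrow> 'a) \<Rightarrow> (nat \<Rightarrow> 'a)" where
  "tadd k x y = restrict (\<lambda>i. x i + y i) {..<k}"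

definition tsub :: "nat \<Rightarrow> (nat \<Rightarrow> 'a::ab_group_add) \<Rightarrow> (nat \<Rightarrow> 'a) \<Rightarrow> (nat \<Rightarrow> 'a)" where
  "tsub k x y = restrict (\<lambda>i. x i - y i) {..<k}"

definition tsumset :: "nat \<Rightarrow> (nat \<Rightarrow> 'a::ab_group_add) set \<Rightarrow> (nat \<Rightarrow> 'a) set \<Rightarrow> (nat \<Rightarrow> 'a) set" where
  "tsumset k X Y = {tadd k x y | x y. x \<in> X \<and> y \<in> Y}"

definition tdiffset :: "nat \<Rightarrow> (nat \<Rightarrow> 'a::ab_group_add) set \<Rightarrow> (nat \<Rightarrow> 'a) set \<Rightarrow> (nat \<Rightarrow> 'a) set" where
  "tdiffset k X Y = {tsub k x y | x y. x \<in> X \<and> y \<in> Y}"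

definition Delta :: "nat \<Rightarrow> 'a set \<Rightarrow> (nat \<Rightarrow> 'a) set" where
  "Delta k Z = diag k ` Z"

definition Rk :: "nat \<Rightarrow> 'a::ab_group_add set \<Rightarrow> 'a set \<Rightarrow> real" where
  "Rk k B A = Min {real (card (tsumset k (tpow k B) (Delta k Z))) / real (card Z) | Z. Z \<noteq> {} \<and> Z \<subseteq> A}"

definition circ :: "'a::ab_group_add set \<Rightarrow> 'a \<Rightarrow> nat" where
  "circ X x = card {(a, b). a \<in> X \<and> b \<in> X \<and> b - a = x}"

definition Ej :: "nat \<Rightarrow> 'a::ab_group_add set \<Rightarrow> 'a set \<Rightarrow> real" where
  "Ej j A B = (\<Sum>x\<in>{b - a | a b. a \<in> A \<and> b \<in> A}. real (circ A x) * real (circ B x) ^ (j - 1))"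

definition Mrows :: "nat \<Rightarrow> 'a::ab_group_add set \<Rightarrow> 'a set \<Rightarrow> (nat \<Rightarrow> 'a) set" where
  "Mrows k A B = tdiffset k (tpow k B) (Delta k A)"

definition Mentry :: "nat \<Rightarrow> 'a::ab_group_add set \<Rightarrow> 'a set \<Rightarrow> (nat \<Rightarrow> 'a) \<Rightarrow> 'a \<Rightarrow> real" where
  "Mentry k A B x y = (if y \<in> A then 1 else 0) * (\<Prod>i<k. if y + x i \<in> B then 1 else 0)"

definition lambda1 :: "'a::ab_group_add set \<Rightarrow> 'a set \<Rightarrow> nat \<Rightarrow> real" where
  "lambda1 A B k = Sup {sqrt (\<Sum>x\<in>Mrows k A B. (\<Sum>y\<in>A. Mentry k A B x y * w y)^2) / sqrt (\<Sum>y\<in>A. (w y)^2)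
                        | w. \<exists>y\<in>A. w y \<noteq> 0}"

end

theory Submission
  imports Defs "HOL-Analysis.Convex"
begin

text \<open>Let \<open>P = Z \<times> B\<^sup>k\<close> and \<open>h (y, b) = b + \<Delta>(y)\<close>, so that \<open>h(P) = B\<^sup>k + \<Delta>(Z)\<close>.
  By Cauchy--Schwarz \<open>|h(P)| \<ge> |P|\<^sup>2 / N\<close>, where \<open>N\<close> is the number of pairs \<open>p, q \<in> P\<close>
  with \<open>h p = h q\<close>. A colliding pair \<open>(y, b), (y', b')\<close> satisfies \<open>b' - b = \<Delta>(y - y')\<close>,
  hence \<open>N \<le> \<Sum> (B\<circ>B)(y' - y)^k\<close> over \<open>y, y' \<in> Z\<close>, which Cauchy--Schwarz bounds by
  \<open>|Z| E_{2k+1}(A,B)^{1/2}\<close>. Alternatively, a colliding pair is determined by the row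
  \<open>x = b - \<Delta>(y')\<close> of \<open>M\<close> and two columns \<open>y, y' \<in> Z\<close> with nonzero entries in that row,
  so \<open>N \<le> \<parallel>M 1_Z\<parallel>\<^sup>2 \<le> \<lambda>\<^sub>1\<^sup>2 |Z|\<close>. For the last claim take \<open>P = {(y, b) : y \<in> A\<^sub>1, b \<in> B^(y)}\<close>
  and extend the sum over \<open>A \<times> A\<close>, which gives exactly \<open>E_{k+1}(A,B)\<close>.\<close>

definition collisions :: "('b \<Rightarrow> 'c) \<Rightarrow> 'b set \<Rightarrow> ('b \<times> 'b) set" where
  "collisions h P = {(p, q). p \<in> P \<and> q \<in> P \<and> h p = h q}"

lemma card_squared_le_card_image_mult_collisions:
  assumes "finite P"
  shows "real (card P)^2 \<le> real (card (h ` P)) * real (card (collisions h P))"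
proof -
  define c where "c v = card {p \<in> P. h p = v}" for v
  have card_P: "real (card P) = (\<Sum>v\<in>h ` P. real (c v))"
    using sum.group[OF assms finite_imageI[OF assms] subset_refl, where g = h and h = "\<lambda>_. 1::real"]
    by (simp add: c_def)
  have "card (collisions h P) = card (\<Union>v\<in>h ` P. {p \<in> P. h p = v} \<times> {p \<in> P. h p = v})"
    unfolding collisions_def by (rule arg_cong[where f = card]) auto
  also have "\<dots> = (\<Sum>v\<in>h ` P. c v * c v)"
    using assms by (subst card_UN_disjoint) (auto simp: c_def card_cartesian_product)
  finally have "card (collisions h P) = (\<Sum>v\<in>h ` P. c v * c v)" .
  then have "real (card (collisions h P)) = (\<Sum>v\<in>h ` P. real (c v)^2)"
    by (simp add: power2_eq_square)
  then show ?thesis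
    using sum_squared_le_sum_of_squares[of "\<lambda>v. real (c v)" "h ` P"]
    by (simp add: card_P mult.commute)
qed

lemma card_image_ge_of_collisions_le:
  assumes "finite P" and "real (card (collisions h P)) \<le> E"
  shows "real (card P)^2 / E \<le> real (card (h ` P))"
proof (cases "E = 0")
  case False
  have "real (card P)^2 \<le> real (card (h ` P)) * E"
    using card_squared_le_card_image_mult_collisions[OF assms(1), of h] assms(2)
    by (meson mult_left_mono of_nat_0_le_iff order_trans)
  moreover have "E > 0" using False assms(2) of_nat_0_le_iff order_trans by fastforce
  ultimately show ?thesis by (simp add: divide_simps)
qed simp

lemma finite_tpow: "finite B \<Longrightarrow> finite (tpow k B)"
  by (simp add: tpow_def finite_PiE)

lemma card_tpow: "card (tpow k B) = card B ^ k"
  by (simp add: tpow_def card_PiE)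

lemma restrict_eq_tpow:
  assumes "b \<in> tpow k B" and "\<And>i. i < k \<Longrightarrow> f i = b i"
  shows "restrict f {..<k} = b"
  using assms by (auto simp: tpow_def PiE_def extensional_def)

lemma card_tuple_pairs_with_difference_le:
  assumes "finite B"
  shows "card {(b, b'). b \<in> tpow k B \<and> b' \<in> tpow k B \<and> (\<forall>i<k. b' i - b i = d)} \<le> circ B d ^ k"
proof -
  define C where "C = {(a, b). a \<in> B \<and> b \<in> B \<and> b - a = d}"
  define g where "g c = (restrict (fst \<circ> c) {..<k}, restrict (snd \<circ> c) {..<k})"
    for c :: "nat \<Rightarrow> 'a \<times> 'a"
  have "finite C" using assms by (auto simp: C_def intro: finite_subset[of _ "B \<times> B"])
  have "{(b, b'). b \<in> tpow k B \<and> b' \<in> tpow k B \<and> (\<forall>i<k. b' i - b i = d)}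
        \<subseteq> g ` PiE {..<k} (\<lambda>_. C)"
  proof clarify
    fix b b' assume b: "b \<in> tpow k B" "b' \<in> tpow k B" "\<forall>i<k. b' i - b i = d"
    then have mem: "restrict (\<lambda>i. (b i, b' i)) {..<k} \<in> PiE {..<k} (\<lambda>_. C)"
      by (simp add: restrict_PiE_iff C_def tpow_def PiE_iff)
    have eq: "g (restrict (\<lambda>i. (b i, b' i)) {..<k}) = (b, b')"
      using b by (simp add: g_def o_def restrict_eq_tpow)
    show "(b, b') \<in> g ` PiE {..<k} (\<lambda>_. C)" using image_eqI[where f = g, OF eq[symmetric] mem] .
  qed
  then have "card {(b, b'). b \<in> tpow k B \<and> b' \<in> tpow k B \<and> (\<forall>i<k. b' i - b i = d)}
             \<le> card (g ` PiE {..<k} (\<lambda>_. C))"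
    using \<open>finite C\<close> by (intro card_mono) (auto simp: finite_PiE)
  also have "\<dots> \<le> card (PiE {..<k} (\<lambda>_. C))"
    using \<open>finite C\<close> by (intro card_image_le) (simp add: finite_PiE)
  also have "\<dots> = circ B d ^ k" by (simp add: card_PiE circ_def C_def)
  finally show ?thesis .
qed

lemma card_collisions_le_sum_circ_power:
  assumes "finite S" "finite B" "P \<subseteq> S \<times> tpow k B"
    and "\<And>y b y' b' i. (y, b) \<in> P \<Longrightarrow> (y', b') \<in> P \<Longrightarrow> h (y, b) = h (y', b') \<Longrightarrow> i < k
           \<Longrightarrow> b' i - b i = \<sigma> y y'"
  shows "real (card (collisions h P)) \<le> (\<Sum>(y, y')\<in>S \<times> S. real (circ B (\<sigma> y y'))^k)"
proof -
  define D where "D d = {(b, b'). b \<in> tpow k B \<and> b' \<in> tpow k B \<and> (\<forall>i<k. b' i - b i = d)}" for d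
  define F :: "('a \<times> 'a) \<times> (nat \<Rightarrow> 'b) \<times> (nat \<Rightarrow> 'b) \<Rightarrow> _"
    where "F = (\<lambda>((y, y'), (b, b')). ((y, b), (y', b')))"
  let ?Q = "SIGMA (y, y'):S \<times> S. D (\<sigma> y y')"
  have fin_D: "finite (D d)" for d
    using assms(2) by (auto simp: D_def finite_tpow intro: finite_subset[of _ "tpow k B \<times> tpow k B"])
  have fin_Q: "finite ?Q"
    using assms(1) fin_D by (intro finite_SigmaI) auto
  have "collisions h P \<subseteq> F ` ?Q"
  proof clarify
    fix y b y' b' assume "((y, b), (y', b')) \<in> collisions h P"
    then have "(y, b) \<in> P" "(y', b') \<in> P" "h (y, b) = h (y', b')" by (auto simp: collisions_def)
    with assms(3,4) have mem: "((y, y'), (b, b')) \<in> ?Q" by (auto simp: D_def)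
    have "F ((y, y'), (b, b')) = ((y, b), (y', b'))" by (simp add: F_def)
    from image_eqI[where f = F, OF this[symmetric] mem] show "((y, b), (y', b')) \<in> F ` ?Q" .
  qed
  then have "card (collisions h P) \<le> card (F ` ?Q)"
    using fin_Q by (intro card_mono) auto
  also have "\<dots> \<le> card ?Q"
    using fin_Q by (rule card_image_le)
  also have "\<dots> = (\<Sum>(y, y')\<in>S \<times> S. card (D (\<sigma> y y')))"
    using assms(1) fin_D by (simp add: card_SigmaI split_def)
  finally have "real (card (collisions h P)) \<le> (\<Sum>(y, y')\<in>S \<times> S. real (card (D (\<sigma> y y'))))"
    by (simp add: split_def flip: of_nat_sum)
  also have "\<dots> \<le> (\<Sum>(y, y')\<in>S \<times> S. real (circ B (\<sigma> y y'))^k)"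
    using card_tuple_pairs_with_difference_le[OF assms(2)]
    by (intro sum_mono) (auto simp: D_def split_def simp flip: of_nat_power)
  finally show ?thesis .
qed

lemma circ_uminus: "circ X (- x) = circ X x"
proof -
  have "{(a, b). a \<in> X \<and> b \<in> X \<and> b - a = - x} = prod.swap ` {(a, b). a \<in> X \<and> b \<in> X \<and> b - a = x}"
    by (auto simp: image_def algebra_simps)
  then show ?thesis unfolding circ_def by (simp add: card_image)
qed

lemma sum_pairs_diff_eq_sum_circ:
  fixes F :: "'a::ab_group_add \<Rightarrow> real"
  assumes "finite A"
  shows "(\<Sum>(a, b)\<in>A \<times> A. F (b - a)) = (\<Sum>x\<in>{b - a | a b. a \<in> A \<and> b \<in> A}. real (circ A x) * F x)"
proof -
  define d where "d = (\<lambda>(a, b). b - (a::'a))"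
  have D: "{b - a | a b. a \<in> A \<and> b \<in> A} = d ` (A \<times> A)" by (auto simp: d_def)
  have "(\<Sum>(a, b)\<in>A \<times> A. F (b - a)) = (\<Sum>x\<in>d ` (A \<times> A). \<Sum>p\<in>{p \<in> A \<times> A. d p = x}. F (d p))"
    using assms by (subst sum.group[where g = d]) (auto simp: d_def split_def)
  also have "\<dots> = (\<Sum>x\<in>d ` (A \<times> A). \<Sum>p\<in>{(a, b). a \<in> A \<and> b \<in> A \<and> b - a = x}. F x)"
    by (intro sum.cong refl) (auto simp: d_def)
  also have "\<dots> = (\<Sum>x\<in>d ` (A \<times> A). real (circ A x) * F x)"
    by (simp add: circ_def)
  finally show ?thesis unfolding D .
qed

lemma sum_circ_power_eq_Ej:
  "finite A \<Longrightarrow> (\<Sum>(a, b)\<in>A \<times> A. real (circ B (b - a))^j) = Ej (j + 1) A B"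
  unfolding Ej_def by (simp add: sum_pairs_diff_eq_sum_circ[where F = "\<lambda>x. real (circ B x)^j"])

lemma Ej_nonneg: "Ej j A B \<ge> 0"
  unfolding Ej_def by (rule sum_nonneg) simp

definition shift_plus :: "nat \<Rightarrow> 'a::ab_group_add \<times> (nat \<Rightarrow> 'a) \<Rightarrow> nat \<Rightarrow> 'a" where
  "shift_plus k = (\<lambda>(y, b). tadd k b (diag k y))"

definition shift_minus :: "nat \<Rightarrow> 'a::ab_group_add \<times> (nat \<Rightarrow> 'a) \<Rightarrow> nat \<Rightarrow> 'a" where
  "shift_minus k = (\<lambda>(y, b). tsub k b (diag k y))"

lemma tsumset_Delta_eq_image: "tsumset k X (Delta k Z) = shift_plus k ` (Z \<times> X)"
  unfolding tsumset_def Delta_def shift_plus_def by force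

lemma tdiffset_Delta_eq_image: "tdiffset k X (Delta k Z) = shift_minus k ` (Z \<times> X)"
  unfolding tdiffset_def Delta_def shift_minus_def by force

lemma UN_tsumset_Delta_singleton:
  "(\<Union>y\<in>Y. tsumset k (X y) (Delta k {y})) = shift_plus k ` Sigma Y X"
  unfolding tsumset_Delta_eq_image by blast

lemma UN_tdiffset_Delta_singleton:
  "(\<Union>y\<in>Y. tdiffset k (X y) (Delta k {y})) = shift_minus k ` Sigma Y X"
  unfolding tdiffset_Delta_eq_image by blast

lemma shift_plus_eqD:
  assumes "shift_plus k (y, b) = shift_plus k (y', b')" and "i < k"
  shows "b' i - b i = y - y'"
proof -
  have "b i + y = b' i + y'"
    using fun_cong[OF assms(1), of i] assms(2) by (simp add: shift_plus_def tadd_def diag_def)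
  then show ?thesis by (simp add: algebra_simps)
qed

lemma shift_minus_eqD:
  assumes "shift_minus k (y, b) = shift_minus k (y', b')" and "i < k"
  shows "b' i - b i = y' - y"
proof -
  have "b i - y = b' i - y'"
    using fun_cong[OF assms(1), of i] assms(2) by (simp add: shift_minus_def tsub_def diag_def)
  then show ?thesis by (simp add: algebra_simps)
qed

lemma card_collisions_shift_plus_le:
  assumes "finite S" "finite B" "P \<subseteq> S \<times> tpow k B"
  shows "real (card (collisions (shift_plus k) P)) \<le> (\<Sum>(y, y')\<in>S \<times> S. real (circ B (y' - y))^k)"
proof -
  have "real (card (collisions (shift_plus k) P)) \<le> (\<Sum>(y, y')\<in>S \<times> S. real (circ B (y - y'))^k)"
    using assms by (rule card_collisions_le_sum_circ_power) (rule shift_plus_eqD)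
  also have "\<dots> = (\<Sum>(y, y')\<in>S \<times> S. real (circ B (y' - y))^k)"
    by (metis circ_uminus minus_diff_eq)
  finally show ?thesis .
qed

lemma card_collisions_shift_minus_le:
  assumes "finite S" "finite B" "P \<subseteq> S \<times> tpow k B"
  shows "real (card (collisions (shift_minus k) P)) \<le> (\<Sum>(y, y')\<in>S \<times> S. real (circ B (y' - y))^k)"
  using assms by (rule card_collisions_le_sum_circ_power) (rule shift_minus_eqD)

lemma card_tsumset_div_ge:
  assumes "finite Z" "Z \<noteq> {}" "finite B"
    and "real (card (collisions (shift_plus k) (Z \<times> tpow k B))) \<le> real (card Z) * L"
  shows "real (card B)^(2*k) / L \<le> real (card (tsumset k (tpow k B) (Delta k Z))) / real (card Z)"
proof -
  have "card Z > 0" using assms(1,2) by (simp add: card_gt_0_iff)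
  have "real (card (Z \<times> tpow k B))^2 / (real (card Z) * L)
        \<le> real (card (tsumset k (tpow k B) (Delta k Z)))"
    unfolding tsumset_Delta_eq_image
    using assms by (intro card_image_ge_of_collisions_le) (simp_all add: finite_tpow)
  moreover have "real (card (Z \<times> tpow k B))^2 / (real (card Z) * L)
                 = real (card Z) * (real (card B)^(2*k) / L)"
    using \<open>card Z > 0\<close> by (simp add: card_cartesian_product card_tpow power_mult_distrib power_mult power2_eq_square)
  ultimately show ?thesis
    using \<open>card Z > 0\<close> by (simp add: pos_le_divide_eq mult.commute)
qed

lemma sum_circ_power_le_sqrt_Ej:
  assumes "finite A" "Z \<subseteq> A"
  shows "(\<Sum>(y, y')\<in>Z \<times> Z. real (circ B (y' - y))^k) \<le> real (card Z) * sqrt (Ej (2*k + 1) A B)"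
proof -
  define c where "c = (\<lambda>(y, y'). real (circ B (y' - y))^k)"
  have "finite Z" using finite_subset[OF assms(2,1)] .
  have "(\<Sum>p\<in>Z \<times> Z. c p)^2 \<le> (\<Sum>p\<in>Z \<times> Z. (c p)^2) * real (card (Z \<times> Z))"
    by (rule sum_squared_le_sum_of_squares)
  also have "\<dots> \<le> (\<Sum>p\<in>A \<times> A. (c p)^2) * real (card Z)^2"
    using assms \<open>finite Z\<close>
    by (intro mult_mono sum_mono2) (auto simp: card_cartesian_product power2_eq_square intro: sum_nonneg)
  also have "(\<Sum>p\<in>A \<times> A. (c p)^2) = Ej (2*k + 1) A B"
    using sum_circ_power_eq_Ej[OF assms(1), of B "2*k"]
    by (simp add: c_def split_def power_mult mult.commute)
  finally have "(\<Sum>p\<in>Z \<times> Z. c p)^2 \<le> (real (card Z) * sqrt (Ej (2*k + 1) A B))^2"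
    by (simp add: power_mult_distrib Ej_nonneg mult.commute)
  moreover have "0 \<le> real (card Z) * sqrt (Ej (2*k + 1) A B)"
    by (simp add: Ej_nonneg)
  ultimately show ?thesis
    unfolding c_def by (rule power2_le_imp_le)
qed

lemma Mentry_eq: "Mentry k A B x y = (if y \<in> A \<and> (\<forall>i<k. y + x i \<in> B) then 1 else 0)"
proof -
  have "(\<Prod>i<k. if y + x i \<in> B then 1 else 0) = (if \<forall>i<k. y + x i \<in> B then 1 else (0::real))"
    by (induction k) (auto simp: lessThan_Suc less_Suc_eq)
  then show ?thesis by (simp add: Mentry_def)
qed

lemma finite_Mrows: "finite A \<Longrightarrow> finite B \<Longrightarrow> finite (Mrows k A B)"
proof -
  assume "finite A" "finite B"
  have "Mrows k A B = (\<lambda>(b, z). tsub k b z) ` (tpow k B \<times> Delta k A)"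
    unfolding Mrows_def tdiffset_def by auto
  then show ?thesis
    using \<open>finite A\<close> \<open>finite B\<close> by (simp add: finite_tpow Delta_def)
qed

lemma bdd_above_lambda1_quotients:
  assumes "finite A"
  shows "bdd_above {sqrt (\<Sum>x\<in>Mrows k A B. (\<Sum>y\<in>A. Mentry k A B x y * w y)^2) / sqrt (\<Sum>y\<in>A. (w y)^2)
                     | w. \<exists>y\<in>A. w y \<noteq> 0}"
proof (rule bdd_aboveI, clarify)
  fix w :: "'a \<Rightarrow> real"
  let ?W = "\<Sum>y\<in>A. (w y)^2"
  have "0 \<le> ?W" by (simp add: sum_nonneg)
  have row: "(\<Sum>y\<in>A. Mentry k A B x y * w y)^2 \<le> real (card A) * ?W" for x
  proof -
    have "(\<Sum>y\<in>A. Mentry k A B x y * w y)^2 \<le> (\<Sum>y\<in>A. (Mentry k A B x y)^2) * ?W"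
      by (rule Cauchy_Schwarz_ineq_sum)
    also have "\<dots> \<le> real (card A) * ?W"
      using sum_mono[of A "\<lambda>y. (Mentry k A B x y)^2" "\<lambda>_. 1"]
      by (intro mult_right_mono) (auto simp: Mentry_eq sum_nonneg)
    finally show ?thesis .
  qed
  have "(\<Sum>x\<in>Mrows k A B. (\<Sum>y\<in>A. Mentry k A B x y * w y)^2) \<le> (\<Sum>x\<in>Mrows k A B. real (card A) * ?W)"
    by (rule sum_mono) (rule row)
  then have "sqrt (\<Sum>x\<in>Mrows k A B. (\<Sum>y\<in>A. Mentry k A B x y * w y)^2) \<le> sqrt (real (card (Mrows k A B)) * real (card A) * ?W)"
    by (simp add: mult.assoc)
  then show "sqrt (\<Sum>x\<in>Mrows k A B. (\<Sum>y\<in>A. Mentry k A B x y * w y)^2) / sqrt ?W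
             \<le> sqrt (real (card (Mrows k A B)) * real (card A))"
    using \<open>0 \<le> ?W\<close> by (simp add: real_sqrt_mult divide_le_eq mult.commute)
qed

lemma Mrows_norm_le_lambda1:
  assumes "finite A" and "\<exists>y\<in>A. w y \<noteq> 0"
  shows "(\<Sum>x\<in>Mrows k A B. (\<Sum>y\<in>A. Mentry k A B x y * w y)^2) \<le> (lambda1 A B k)^2 * (\<Sum>y\<in>A. (w y)^2)"
proof -
  let ?S = "\<Sum>x\<in>Mrows k A B. (\<Sum>y\<in>A. Mentry k A B x y * w y)^2"
  let ?W = "\<Sum>y\<in>A. (w y)^2"
  have "?W > 0"
    using assms by (auto intro!: sum_pos2)
  have "sqrt ?S / sqrt ?W \<le> lambda1 A B k"
    unfolding lambda1_def using assms
    by (intro cSup_upper bdd_above_lambda1_quotients) auto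
  then have "(sqrt ?S / sqrt ?W)^2 \<le> (lambda1 A B k)^2"
    by (intro power_mono) (simp_all add: sum_nonneg)
  then show ?thesis
    using \<open>?W > 0\<close> by (simp add: power_divide sum_nonneg divide_le_eq mult.commute)
qed

lemma card_collisions_shift_plus_le_sum_row_squares:
  fixes A B Z :: "'a::ab_group_add set"
  assumes "finite A" "finite B" "Z \<subseteq> A"
  shows "card (collisions (shift_plus k) (Z \<times> tpow k B))
         \<le> (\<Sum>x\<in>Mrows k A B. card {y \<in> Z. \<forall>i<k. y + x i \<in> B}^2)"
proof -
  define G where "G x = {y \<in> Z. \<forall>i<k. y + x i \<in> B}" for x :: "nat \<Rightarrow> 'a"
  define g :: "(nat \<Rightarrow> 'a) \<times> 'a \<times> 'a \<Rightarrow> _"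
    where "g = (\<lambda>(x, y', y). ((y, tadd k x (diag k y')), (y', tadd k x (diag k y))))"
  let ?Q = "SIGMA x:Mrows k A B. G x \<times> G x"
  have fin_Q: "finite ?Q"
    using assms finite_subset[OF _ \<open>finite A\<close>] by (auto simp: G_def finite_Mrows)
  have "collisions (shift_plus k) (Z \<times> tpow k B) \<subseteq> g ` ?Q"
  proof clarify
    fix y b y' b'
    assume "((y, b), (y', b')) \<in> collisions (shift_plus k) (Z \<times> tpow k B)"
    then have y: "y \<in> Z" "y' \<in> Z" and b: "b \<in> tpow k B" "b' \<in> tpow k B"
      and eq: "shift_plus k (y, b) = shift_plus k (y', b')"
      by (auto simp: collisions_def)
    define x where "x = tsub k b (diag k y')"
    have x: "x i + y' = b i" "x i + y = b' i" if "i < k" for i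
    proof -
      have "b' i = b i + (y - y')" using shift_plus_eqD[OF eq that] by (simp add: algebra_simps)
      then show "x i + y' = b i" "x i + y = b' i"
        using that by (simp_all add: x_def tsub_def diag_def algebra_simps)
    qed
    have "x \<in> Mrows k A B"
      using y b assms(3) unfolding x_def Mrows_def tdiffset_def Delta_def by blast
    moreover have "y' \<in> G x" "y \<in> G x"
      using y b x by (auto simp: G_def tpow_def PiE_iff add.commute)
    ultimately have mem: "(x, y', y) \<in> ?Q" by simp
    have "g (x, y', y) = ((y, b), (y', b'))"
      using b x by (auto simp: g_def tadd_def diag_def intro!: restrict_eq_tpow)
    from image_eqI[where f = g, OF this[symmetric] mem] show "((y, b), (y', b')) \<in> g ` ?Q" .
  qed
  then have "card (collisions (shift_plus k) (Z \<times> tpow k B)) \<le> card (g ` ?Q)"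
    using fin_Q by (intro card_mono) auto
  also have "\<dots> \<le> card ?Q"
    using fin_Q by (rule card_image_le)
  also have "\<dots> = (\<Sum>x\<in>Mrows k A B. card (G x)^2)"
    using fin_Q finite_Mrows[OF assms(1,2)] assms finite_subset[OF _ \<open>finite A\<close>]
    by (subst card_SigmaI) (auto simp: G_def card_cartesian_product power2_eq_square)
  finally show ?thesis unfolding G_def .
qed

lemma card_collisions_shift_plus_le_lambda1:
  assumes "finite A" "finite B" "Z \<subseteq> A" "Z \<noteq> {}"
  shows "real (card (collisions (shift_plus k) (Z \<times> tpow k B))) \<le> real (card Z) * (lambda1 A B k)^2"
proof -
  define w where "w y = (if y \<in> Z then 1 else 0 :: real)" for y
  have row: "(\<Sum>y\<in>A. Mentry k A B x y * w y) = real (card {y \<in> Z. \<forall>i<k. y + x i \<in> B})" for x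
  proof -
    let ?G = "{y \<in> Z. \<forall>i<k. y + x i \<in> B}"
    have "(\<Sum>y\<in>A. Mentry k A B x y * w y) = (\<Sum>y\<in>A. if y \<in> ?G then 1 else 0)"
      by (rule sum.cong) (auto simp: Mentry_eq w_def)
    also have "\<dots> = real (card (A \<inter> ?G))"
      using sum.inter_restrict[OF assms(1), of "\<lambda>_. 1::real" ?G] by simp
    also have "A \<inter> ?G = ?G" using assms(3) by auto
    finally show ?thesis .
  qed
  have "(\<Sum>y\<in>A. (w y)^2) = (\<Sum>y\<in>A. if y \<in> Z then 1 else 0)"
    by (rule sum.cong) (simp_all add: w_def)
  also have "\<dots> = real (card (A \<inter> Z))"
    using sum.inter_restrict[OF assms(1), of "\<lambda>_. 1::real" Z] by simp
  also have "A \<inter> Z = Z" using assms(3) by auto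
  finally have "(\<Sum>y\<in>A. (w y)^2) = real (card Z)" .
  moreover have "\<exists>y\<in>A. w y \<noteq> 0" using assms(3,4) by (auto simp: w_def)
  ultimately have "(\<Sum>x\<in>Mrows k A B. real (card {y \<in> Z. \<forall>i<k. y + x i \<in> B})^2)
                   \<le> (lambda1 A B k)^2 * real (card Z)"
    using Mrows_norm_le_lambda1[OF assms(1), of w k B] by (simp add: row)
  then show ?thesis
    using card_collisions_shift_plus_le_sum_row_squares[OF assms(1-3), of k]
    by (simp add: mult.commute flip: of_nat_power of_nat_sum)
qed

lemma card_collisions_shifts_le_Ej:
  assumes "finite A" "finite B" "P \<subseteq> A \<times> tpow k B"
  shows "real (card (collisions (shift_plus k) P)) \<le> Ej (k + 1) A B"
    and "real (card (collisions (shift_minus k) P)) \<le> Ej (k + 1) A B"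
  using card_collisions_shift_plus_le[OF assms] card_collisions_shift_minus_le[OF assms]
  by (simp_all add: sum_circ_power_eq_Ej[OF assms(1)])

lemma card_UN_shifted_ge:
  assumes "finite A" "finite B" "A1 \<subseteq> A" "\<forall>y\<in>A1. Bf y \<subseteq> tpow k B"
  shows "(\<Sum>y\<in>A1. real (card (Bf y)))^2 / Ej (k + 1) A B
           \<le> real (card (\<Union>y\<in>A1. tsumset k (Bf y) (Delta k {y})))"
    and "(\<Sum>y\<in>A1. real (card (Bf y)))^2 / Ej (k + 1) A B
           \<le> real (card (\<Union>y\<in>A1. tdiffset k (Bf y) (Delta k {y})))"
proof -
  have "finite A1" using finite_subset[OF assms(3,1)] .
  moreover have "finite (Bf y)" if "y \<in> A1" for y
    using assms(4) that by (blast intro: finite_subset[OF _ finite_tpow[OF assms(2)]])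
  ultimately have fin: "finite (Sigma A1 Bf)" and card: "real (card (Sigma A1 Bf)) = (\<Sum>y\<in>A1. real (card (Bf y)))"
    by simp_all
  have sub: "Sigma A1 Bf \<subseteq> A \<times> tpow k B" using assms(3,4) by auto
  show "(\<Sum>y\<in>A1. real (card (Bf y)))^2 / Ej (k + 1) A B
          \<le> real (card (\<Union>y\<in>A1. tsumset k (Bf y) (Delta k {y})))"
    using card_image_ge_of_collisions_le[OF fin card_collisions_shifts_le_Ej(1)[OF assms(1,2) sub]]
    by (simp add: UN_tsumset_Delta_singleton card)
  show "(\<Sum>y\<in>A1. real (card (Bf y)))^2 / Ej (k + 1) A B
          \<le> real (card (\<Union>y\<in>A1. tdiffset k (Bf y) (Delta k {y})))"
    using card_image_ge_of_collisions_le[OF fin card_collisions_shifts_le_Ej(2)[OF assms(1,2) sub]]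
    by (simp add: UN_tdiffset_Delta_singleton card)
qed

lemma Rk_attained:
  assumes "finite A" "A \<noteq> {}"
  obtains Z where "Z \<noteq> {}" "Z \<subseteq> A"
    and "Rk k B A = real (card (tsumset k (tpow k B) (Delta k Z))) / real (card Z)"
proof -
  define f where "f Z = real (card (tsumset k (tpow k B) (Delta k Z))) / real (card Z)" for Z
  have "Rk k B A = Min (f ` {Z. Z \<noteq> {} \<and> Z \<subseteq> A})"
    unfolding Rk_def f_def by (rule arg_cong[where f = Min]) blast
  moreover have "Min (f ` {Z. Z \<noteq> {} \<and> Z \<subseteq> A}) \<in> f ` {Z. Z \<noteq> {} \<and> Z \<subseteq> A}"
    using assms by (intro Min_in) auto
  ultimately show ?thesis using that unfolding f_def by auto
qed

theorem theorem42:
  fixes A B :: "'a::ab_group_add set" and k :: nat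
  assumes "finite A" "A \<noteq> {}" "finite B" "B \<noteq> {}" "k \<ge> 1"
  shows "Rk k B A \<ge> real (card B) ^ (2 * k) / (lambda1 A B k)^2
       \<and> Rk k B A \<ge> real (card B) ^ (2 * k) / sqrt (Ej (2 * k + 1) A B)
       \<and> (\<forall>A1 Bf. A1 \<subseteq> A \<and> (\<forall>y\<in>A1. Bf y \<subseteq> tpow k B) \<longrightarrow>
           real (card (\<Union>y\<in>A1. tsumset k (Bf y) (Delta k {y})))
             \<ge> (\<Sum>y\<in>A1. real (card (Bf y)))^2 / Ej (k + 1) A B
         \<and> real (card (\<Union>y\<in>A1. tdiffset k (Bf y) (Delta k {y})))
             \<ge> (\<Sum>y\<in>A1. real (card (Bf y)))^2 / Ej (k + 1) A B)"
proof -
  obtain Z where Z: "Z \<noteq> {}" "Z \<subseteq> A"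
    and Rk: "Rk k B A = real (card (tsumset k (tpow k B) (Delta k Z))) / real (card Z)"
    using Rk_attained[OF assms(1,2)] .
  have "finite Z" using finite_subset[OF Z(2) assms(1)] .
  have "Rk k B A \<ge> real (card B) ^ (2 * k) / (lambda1 A B k)^2"
    unfolding Rk using card_collisions_shift_plus_le_lambda1[OF assms(1,3) Z(2,1)]
    by (rule card_tsumset_div_ge[OF \<open>finite Z\<close> Z(1) assms(3)])
  moreover have "Rk k B A \<ge> real (card B) ^ (2 * k) / sqrt (Ej (2 * k + 1) A B)"
    unfolding Rk
    using order_trans[OF card_collisions_shift_plus_le[OF \<open>finite Z\<close> assms(3) subset_refl]
                         sum_circ_power_le_sqrt_Ej[OF assms(1) Z(2)]]
    by (rule card_tsumset_div_ge[OF \<open>finite Z\<close> Z(1) assms(3)])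
  ultimately show ?thesis
    using card_UN_shifted_ge[OF assms(1,3)] by simp
qed

end
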